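(* Let $Q=\sum_{j=1}^n q_j(z)\partial/\partial z_j$ be a weighted homogeneous holomorphic polynomial vector field on $\mathbb{C}^n$ with $Q(0)=0$, and suppose $S$ is a nontrivial orbit of $Q$ with $0\in\bar S$ and $Q\neq0$ on $S$. Let $\nu$ be a real number and $\alpha$ a positive integer. If $Q^\alpha p^{(\nu)}=0$ on $\mathbb{C}^n$, then $p^{(\nu)}|_S=0$.
   Context: Weights $\delta_j=1/(2m_j)$ ($m_j$ positive integers) on $z_1,\dots,z_n$; $\mathrm{wt}(z^J)=\sum j_k\delta_k$, $\mathrm{wt}(z^A\bar z^B)=\mathrm{wt}\,A+\mathrm{wt}\,B$; a polynomial or vector field is homogeneous of weight $\mu$ if all monomials of the polynomial (resp. of $q_j$) have weight $\mu$ (resp. $\mu-\delta_j$). Standing assumption: $p(z,\bar z)=\sum c_{A,B}z^A\bar z^B$ is a real polynomial, homogeneous of weight 1, containing no purely holomorphic or purely antiholomorphic monomials ($c_{A,B}\ne0\Rightarrow A\ne0,B\neq0$). The signature of $z^A\bar z^B$ is $\mathrm{wt}\,A-\mathrm{wt}\,B$, and $p^{(\nu)}=\sum_{\mathrm{wt}A-\mathrm{wt}B=\nu}c_{A,B}z^A\bar z^B=\sum_B f_{\nu,B}(z)\bar z^B$ with $f_{\nu,B}$ holomorphic polynomials. $Q$ acts on polynomials in $z,\bar z$ by differentiation in $z$ only: $Q(f\bar z^B)=(Qf)\bar z^B$. An orbit of $Q$ is the image $\varphi(\mathcal{D})$ of an integral curve $\varphi:\mathcal{D}\to\mathbb{C}^n$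 ($\dot\varphi=Q(\varphi)$) on a maximal domain $\mathcal{D}\subset\mathbb{C}$. *)

theory Defs
  imports "HOL-Analysis.Analysis"
begin

definition delta :: "('n \<Rightarrow> nat) \<Rightarrow> 'n \<Rightarrow> real" where
  "delta m j = 1 / (2 * real (m j))"

definition wt :: "('n::finite \<Rightarrow> nat) \<Rightarrow> ('n \<Rightarrow> nat) \<Rightarrow> real" where
  "wt m A = (\<Sum>j\<in>UNIV. real (A j) * delta m j)"

definition monom :: "('n::finite \<Rightarrow> nat) \<Rightarrow> complex^'n \<Rightarrow> complex" where
  "monom A z = (\<Prod>j\<in>UNIV. (z $ j) ^ A j)"

definition hpoly :: "(('n::finite \<Rightarrow> nat) \<Rightarrow> complex) \<Rightarrow> complex^'n \<Rightarrow> complex" where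
  "hpoly c z = (\<Sum>A\<in>{A. c A \<noteq> 0}. c A * monom A z)"

definition vfield :: "('n::finite \<Rightarrow> ('n \<Rightarrow> nat) \<Rightarrow> complex) \<Rightarrow> complex^'n \<Rightarrow> complex^'n" where
  "vfield qc z = (\<chi> j. hpoly (qc j) z)"

text \<open>A polynomial in z, zbar is represented by a function F z w (holomorphic polynomial in
  (z,w)) evaluated at w = conj z.  Q acts by differentiating in z only.\<close>
definition Qop :: "('n::finite \<Rightarrow> ('n \<Rightarrow> nat) \<Rightarrow> complex)
    \<Rightarrow> (complex^'n \<Rightarrow> complex^'n \<Rightarrow> complex) \<Rightarrow> (complex^'n \<Rightarrow> complex^'n \<Rightarrow> complex)" where
  "Qop qc F = (\<lambda>z w. \<Sum>j\<in>UNIV. hpoly (qc j) z *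
        deriv (\<lambda>t. F (\<chi> k. if k = j then t else z $ k) w) (z $ j))"

definition cnjv :: "complex^'n \<Rightarrow> complex^'n" where
  "cnjv z = (\<chi> j. cnj (z $ j))"

definition pfun :: "(('n::finite \<Rightarrow> nat) \<Rightarrow> ('n \<Rightarrow> nat) \<Rightarrow> complex)
     \<Rightarrow> complex^'n \<Rightarrow> complex^'n \<Rightarrow> complex" where
  "pfun c z w = (\<Sum>(A,B)\<in>{(A,B). c A B \<noteq> 0}. c A B * monom A z * monom B w)"

definition psig :: "('n::finite \<Rightarrow> nat) \<Rightarrow> (('n \<Rightarrow> nat) \<Rightarrow> ('n \<Rightarrow> nat) \<Rightarrow> complex) \<Rightarrow> real
     \<Rightarrow> complex^'n \<Rightarrow> complex^'n \<Rightarrow> complex" where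
  "psig m c \<nu> z w = (\<Sum>(A,B)\<in>{(A,B). c A B \<noteq> 0 \<and> wt m A - wt m B = \<nu>}.
        c A B * monom A z * monom B w)"

definition integral_curve :: "('n::finite \<Rightarrow> ('n \<Rightarrow> nat) \<Rightarrow> complex)
    \<Rightarrow> (complex \<Rightarrow> complex^'n) \<Rightarrow> complex set \<Rightarrow> bool" where
  "integral_curve qc \<phi> D \<longleftrightarrow> open D \<and> connected D \<and> D \<noteq> {} \<and>
     (\<forall>t\<in>D. \<forall>j. ((\<lambda>s. \<phi> s $ j) has_field_derivative (vfield qc (\<phi> t) $ j)) (at t))"

definition maximal_integral_curve :: "('n::finite \<Rightarrow> ('n \<Rightarrow> nat) \<Rightarrow> complex)
    \<Rightarrow> (complex \<Rightarrow> complex^'n) \<Rightarrow> complex set \<Rightarrow> bool" where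
  "maximal_integral_curve qc \<phi> D \<longleftrightarrow> integral_curve qc \<phi> D \<and>
     (\<forall>\<psi> D'. D \<subseteq> D' \<and> integral_curve qc \<psi> D' \<and> (\<forall>t\<in>D. \<psi> t = \<phi> t) \<longrightarrow> D' = D)"

definition is_orbit :: "('n::finite \<Rightarrow> ('n \<Rightarrow> nat) \<Rightarrow> complex) \<Rightarrow> (complex^'n) set \<Rightarrow> bool" where
  "is_orbit qc S \<longleftrightarrow> (\<exists>\<phi> D. maximal_integral_curve qc \<phi> D \<and> S = \<phi> ` D)"

end

theory Submission
  imports Defs "HOL-Complex_Analysis.Conformal_Mappings"
begin

text \<open>
  Write \<open>p^(\<nu>)\<close> as a holomorphic polynomial \<open>F(z, w)\<close> evaluated at \<open>w = cnj z\<close>. A polynomial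
  vanishing on the totally real set \<open>{w = cnj z}\<close> vanishes identically (identity theorem, one
  coordinate pair at a time), so \<open>Q\<^sup>\<alpha> F = 0\<close> for all \<open>(z, w)\<close>. Since \<open>Q\<close> differentiates in \<open>z\<close>
  only, along an integral curve \<open>\<phi>\<close> we have \<open>d/dt F(\<phi>(t), w) = (Q F)(\<phi>(t), w)\<close>. Descending in
  \<open>k\<close>, each \<open>Q\<^sup>k F(\<phi>(t), w)\<close> is therefore constant on the connected time domain, and by
  continuity it equals its value at \<open>0 \<in> closure S\<close>, which is \<open>0\<close> because \<open>Q(0) = 0\<close> and \<open>p\<close> has
  no purely holomorphic monomials.
\<close>

inductive zw_polynomial :: "(complex^'n \<Rightarrow> complex^'n \<Rightarrow> complex) \<Rightarrow> bool" where
  const: "zw_polynomial (\<lambda>z w. a)"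
| coord_z: "zw_polynomial (\<lambda>z w. z $ j)"
| coord_w: "zw_polynomial (\<lambda>z w. w $ j)"
| add: "zw_polynomial f \<Longrightarrow> zw_polynomial g \<Longrightarrow> zw_polynomial (\<lambda>z w. f z w + g z w)"
| mult: "zw_polynomial f \<Longrightarrow> zw_polynomial g \<Longrightarrow> zw_polynomial (\<lambda>z w. f z w * g z w)"

lemma zw_polynomial_sum:
  "(\<And>x. x \<in> I \<Longrightarrow> zw_polynomial (f x)) \<Longrightarrow> zw_polynomial (\<lambda>z w. \<Sum>x\<in>I. f x z w)"
  by (induction I rule: infinite_finite_induct) (auto intro: zw_polynomial.intros)

lemma zw_polynomial_prod:
  "(\<And>x. x \<in> I \<Longrightarrow> zw_polynomial (f x)) \<Longrightarrow> zw_polynomial (\<lambda>z w. \<Prod>x\<in>I. f x z w)"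
  by (induction I rule: infinite_finite_induct) (auto intro: zw_polynomial.intros)

lemma zw_polynomial_power: "zw_polynomial f \<Longrightarrow> zw_polynomial (\<lambda>z w. f z w ^ n)"
  by (induction n) (auto intro: zw_polynomial.intros)

lemma zw_polynomial_monom_z: "zw_polynomial (\<lambda>z w. monom A z)"
  unfolding monom_def by (intro zw_polynomial_prod zw_polynomial_power zw_polynomial.coord_z)

lemma zw_polynomial_monom_w: "zw_polynomial (\<lambda>z w. monom A w)"
  unfolding monom_def by (intro zw_polynomial_prod zw_polynomial_power zw_polynomial.coord_w)

lemma zw_polynomial_hpoly: "zw_polynomial (\<lambda>z w. hpoly c z)"
  unfolding hpoly_def by (intro zw_polynomial_sum zw_polynomial.mult zw_polynomial.const zw_polynomial_monom_z)

lemma zw_polynomial_psig: "zw_polynomial (psig m c \<nu>)"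
  unfolding psig_def case_prod_unfold
  by (intro zw_polynomial_sum zw_polynomial.mult zw_polynomial.const zw_polynomial_monom_z zw_polynomial_monom_w)

lemma holomorphic_on_zw_polynomial:
  assumes "zw_polynomial H" "\<And>j. (\<lambda>t. u t $ j) holomorphic_on UNIV" "\<And>j. (\<lambda>t. v t $ j) holomorphic_on UNIV"
  shows "(\<lambda>t. H (u t) (v t)) holomorphic_on UNIV"
  using assms by (induction rule: zw_polynomial.induct) (auto intro!: holomorphic_intros)

lemma continuous_on_zw_polynomial: "zw_polynomial H \<Longrightarrow> continuous_on UNIV (\<lambda>z. H z w)"
  by (induction rule: zw_polynomial.induct) (auto intro!: continuous_intros)

definition partial_z :: "'n \<Rightarrow> (complex^'n \<Rightarrow> complex^'n \<Rightarrow> complex) \<Rightarrow> complex^'n \<Rightarrow> complex^'n \<Rightarrow> complex" where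
  "partial_z j F z w = deriv (\<lambda>t. F (\<chi> k. if k = j then t else z $ k) w) (z $ j)"

lemma Qop_eq_sum_partial_z: "Qop qc F = (\<lambda>z w. \<Sum>j\<in>UNIV. hpoly (qc j) z * partial_z j F z w)"
  by (simp add: Qop_def partial_z_def fun_eq_iff)

lemma vec_update_same: "(\<chi> k. if k = j then z $ j else z $ k) = z"
  by (simp add: vec_eq_iff)

lemma holomorphic_on_vec_update:
  "f holomorphic_on UNIV \<Longrightarrow> (\<lambda>t. (\<chi> k. if k = j then f t else z $ k) $ i) holomorphic_on UNIV"
  by (cases "i = j") (auto intro!: holomorphic_intros)

lemma has_field_derivative_partial_z:
  assumes "zw_polynomial H"
  shows "((\<lambda>t. H (\<chi> k. if k = j then t else z $ k) w) has_field_derivative partial_z j H z w) (at (z $ j))"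
proof -
  have "(\<lambda>t. H (\<chi> k. if k = j then t else z $ k) w) holomorphic_on UNIV"
    using holomorphic_on_zw_polynomial[OF assms, of "\<lambda>t. \<chi> k. if k = j then t else z $ k" "\<lambda>_. w"]
      holomorphic_on_vec_update[OF holomorphic_on_ident, of j z]
    by simp
  then have "(\<lambda>t. H (\<chi> k. if k = j then t else z $ k) w) field_differentiable at (z $ j)"
    by (rule holomorphic_on_imp_differentiable_at) auto
  then show ?thesis
    unfolding partial_z_def by (simp add: DERIV_deriv_iff_field_differentiable)
qed

lemma partial_z_eqI:
  "zw_polynomial H \<Longrightarrow> ((\<lambda>t. H (\<chi> k. if k = j then t else z $ k) w) has_field_derivative D) (at (z $ j))
    \<Longrightarrow> partial_z j H z w = D"
  using has_field_derivative_partial_z DERIV_unique by blast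

lemma partial_z_const: "partial_z j (\<lambda>z w. a) z w = 0"
  by (rule partial_z_eqI) (auto intro: zw_polynomial.const)

lemma partial_z_coord_z: "partial_z j (\<lambda>z w. z $ i) z w = (if j = i then 1 else 0)"
  by (rule partial_z_eqI) (auto intro: zw_polynomial.coord_z intro!: derivative_eq_intros)

lemma partial_z_coord_w: "partial_z j (\<lambda>z w. w $ i) z w = 0"
  by (rule partial_z_eqI) (auto intro: zw_polynomial.coord_w)

lemma partial_z_add:
  "zw_polynomial f \<Longrightarrow> zw_polynomial g \<Longrightarrow>
    partial_z j (\<lambda>z w. f z w + g z w) z w = partial_z j f z w + partial_z j g z w"
  by (rule partial_z_eqI) (auto intro: zw_polynomial.add intro!: derivative_eq_intros has_field_derivative_partial_z)

lemma partial_z_mult: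
  "zw_polynomial f \<Longrightarrow> zw_polynomial g \<Longrightarrow>
    partial_z j (\<lambda>z w. f z w * g z w) z w = partial_z j f z w * g z w + f z w * partial_z j g z w"
  by (rule partial_z_eqI)
    (auto intro: zw_polynomial.mult intro!: derivative_eq_intros has_field_derivative_partial_z simp: vec_update_same)

lemma zw_polynomial_partial_z: "zw_polynomial H \<Longrightarrow> zw_polynomial (partial_z j H)"
proof (induction rule: zw_polynomial.induct)
  case (add f g)
  then have "partial_z j (\<lambda>z w. f z w + g z w) = (\<lambda>z w. partial_z j f z w + partial_z j g z w)"
    by (simp add: fun_eq_iff partial_z_add)
  with add.IH show ?case
    by (simp add: zw_polynomial.add)
next
  case (mult f g)
  then have "partial_z j (\<lambda>z w. f z w * g z w) =
      (\<lambda>z w. partial_z j f z w * g z w + f z w * partial_z j g z w)"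
    by (simp add: fun_eq_iff partial_z_mult)
  with mult show ?case
    by (simp add: zw_polynomial.add zw_polynomial.mult)
next
  case (coord_z i)
  have "partial_z j (\<lambda>z w. z $ i) = (\<lambda>z w. if j = i then 1 else 0)"
    by (simp add: fun_eq_iff partial_z_coord_z)
  then show ?case
    by (simp add: zw_polynomial.const)
qed (simp_all add: fun_eq_iff partial_z_const partial_z_coord_w zw_polynomial.const)

lemma zw_polynomial_Qop: "zw_polynomial F \<Longrightarrow> zw_polynomial (Qop qc F)"
  unfolding Qop_eq_sum_partial_z
  by (intro zw_polynomial_sum zw_polynomial.mult zw_polynomial_hpoly zw_polynomial_partial_z)

lemma zw_polynomial_funpow_Qop: "zw_polynomial F \<Longrightarrow> zw_polynomial ((Qop qc ^^ k) F)"
  by (induction k) (auto intro: zw_polynomial_Qop)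

lemma has_field_derivative_zw_polynomial_chain:
  assumes "zw_polynomial H" "\<And>j. ((\<lambda>s. \<phi> s $ j) has_field_derivative \<phi>' j) (at t)"
  shows "((\<lambda>s. H (\<phi> s) w) has_field_derivative (\<Sum>j\<in>UNIV. partial_z j H (\<phi> t) w * \<phi>' j)) (at t)"
  using assms
proof (induction rule: zw_polynomial.induct)
  case (coord_z i)
  then show ?case by (simp add: partial_z_coord_z if_distrib[of "\<lambda>x. x * _"] cong: if_cong)
next
  case (add f g)
  then show ?case
    by (auto intro!: derivative_eq_intros simp: partial_z_add sum.distrib algebra_simps)
next
  case (mult f g)
  then show ?case
    by (auto intro!: derivative_eq_intros
        simp: partial_z_mult sum.distrib algebra_simps sum_distrib_left sum_distrib_right)
qed (auto simp: partial_z_const partial_z_coord_w intro!: derivative_eq_intros)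

lemma has_field_derivative_along_integral_curve:
  assumes "zw_polynomial F" "integral_curve qc \<phi> D" "t \<in> D"
  shows "((\<lambda>s. F (\<phi> s) w) has_field_derivative Qop qc F (\<phi> t) w) (at t)"
proof -
  have "((\<lambda>s. F (\<phi> s) w) has_field_derivative
      (\<Sum>j\<in>UNIV. partial_z j F (\<phi> t) w * (vfield qc (\<phi> t) $ j))) (at t)"
    using assms by (intro has_field_derivative_zw_polynomial_chain) (auto simp: integral_curve_def)
  then show ?thesis
    by (simp add: Qop_eq_sum_partial_z vfield_def mult.commute)
qed

lemma holomorphic_eq_zero_from_real_axis:
  assumes "f holomorphic_on UNIV" "\<And>x::real. f (complex_of_real x) = 0"
  shows "f w = 0"
proof (rule analytic_continuation[OF assms(1) open_UNIV connected_UNIV subset_UNIV UNIV_I,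
      of 0 "range complex_of_real"])
  show "0 islimpt range complex_of_real"
    unfolding islimpt_approachable
  proof (intro allI impI)
    fix e :: real
    assume "e > 0"
    then show "\<exists>x'\<in>range complex_of_real. x' \<noteq> 0 \<and> dist x' 0 < e"
      by (intro bexI[of _ "complex_of_real (e/2)"]) (auto simp: dist_norm simp del: of_real_divide)
  qed
qed (use assms in auto)

lemma eq_zero_from_cnj_diagonal:
  fixes g :: "complex \<Rightarrow> complex \<Rightarrow> complex"
  assumes hol_x: "\<And>y. (\<lambda>x. g (x + \<i> * y) (x - \<i> * y)) holomorphic_on UNIV"
    and hol_y: "\<And>x. (\<lambda>y. g (x + \<i> * y) (x - \<i> * y)) holomorphic_on UNIV"
    and zero: "\<And>a. g a (cnj a) = 0"
  shows "g a b = 0"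
proof -
  have "g (of_real x + \<i> * of_real y) (of_real x - \<i> * of_real y) = 0" for x y :: real
    using zero[of "of_real x + \<i> * of_real y"] by (simp add: complex_cnj_diff)
  then have "g (x + \<i> * of_real y) (x - \<i> * of_real y) = 0" for x and y :: real
    by (rule holomorphic_eq_zero_from_real_axis[OF hol_x])
  then have xy: "g (x + \<i> * y) (x - \<i> * y) = 0" for x y
    by (rule holomorphic_eq_zero_from_real_axis[OF hol_y])
  have "(a + b) / 2 + \<i> * ((a - b) / (2 * \<i>)) = a" "(a + b) / 2 - \<i> * ((a - b) / (2 * \<i>)) = b"
    by (auto simp: field_simps)
  then show ?thesis
    using xy[of "(a + b) / 2" "(a - b) / (2 * \<i>)"] by simp
qed

lemma zw_polynomial_eq_zero_from_cnj:
  fixes H :: "complex^'n::finite \<Rightarrow> complex^'n \<Rightarrow> complex"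
  assumes H: "zw_polynomial H" and zero: "\<forall>z. H z (cnjv z) = 0"
  shows "H z w = 0"
proof -
  have "\<forall>z w. (\<forall>j. j \<notin> J \<longrightarrow> w $ j = cnj (z $ j)) \<longrightarrow> H z w = 0" if "finite J" for J :: "'n set"
    using that
  proof (induction J rule: finite_induct)
    case empty
    show ?case
    proof (intro allI impI)
      fix z w :: "complex^'n"
      assume "\<forall>j. j \<notin> {} \<longrightarrow> w $ j = cnj (z $ j)"
      then have "w = cnjv z"
        by (simp add: vec_eq_iff cnjv_def)
      with zero show "H z w = 0"
        by simp
    qed
  next
    case (insert j J)
    show ?case
    proof (intro allI impI)
      fix z w :: "complex^'n"
      assume cnj_outside: "\<forall>i. i \<notin> insert j J \<longrightarrow> w $ i = cnj (z $ i)"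
      define g where "g a b = H (\<chi> k. if k = j then a else z $ k) (\<chi> k. if k = j then b else w $ k)" for a b
      have "g a b = 0" for a b
      proof (rule eq_zero_from_cnj_diagonal[of g])
        show "g a (cnj a) = 0" for a
          unfolding g_def using insert.IH cnj_outside by auto
        show "(\<lambda>x. g (x + \<i> * y) (x - \<i> * y)) holomorphic_on UNIV" for y
          unfolding g_def by (intro holomorphic_on_zw_polynomial[OF H] holomorphic_on_vec_update holomorphic_intros)
        show "(\<lambda>y. g (x + \<i> * y) (x - \<i> * y)) holomorphic_on UNIV" for x
          unfolding g_def by (intro holomorphic_on_zw_polynomial[OF H] holomorphic_on_vec_update holomorphic_intros)
      qed
      from this[of "z $ j" "w $ j"] show "H z w = 0"
        by (simp add: g_def vec_update_same)
    qed
  qed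
  then show ?thesis by auto
qed

lemma monom_at_zero: "A \<noteq> (\<lambda>_. 0) \<Longrightarrow> monom A 0 = 0"
  unfolding monom_def by (metis (mono_tags) UNIV_I finite_class.finite_UNIV power_0_left prod_zero zero_index)

lemma psig_at_zero:
  "\<forall>A B. c A B \<noteq> 0 \<longrightarrow> A \<noteq> (\<lambda>_. 0) \<Longrightarrow> psig m c \<nu> 0 w = 0"
  unfolding psig_def by (intro sum.neutral) (auto simp: monom_at_zero)

lemma Qop_at_zero: "vfield qc 0 = 0 \<Longrightarrow> Qop qc F 0 w = 0"
  by (simp add: Qop_eq_sum_partial_z vfield_def vec_eq_iff)

lemma vanishes_along_integral_curve_if_Qop_vanishes:
  assumes F: "zw_polynomial F" and curve: "integral_curve qc \<phi> D"
    and limit_zero: "0 \<in> closure (\<phi> ` D)" and F_zero: "F 0 w = 0"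
    and QF: "\<forall>s\<in>D. Qop qc F (\<phi> s) w = 0" and t: "t \<in> D"
  shows "F (\<phi> t) w = 0"
proof -
  have D: "open D" "connected D"
    using curve by (auto simp: integral_curve_def)
  have deriv_zero: "((\<lambda>s. F (\<phi> s) w) has_field_derivative 0) (at s)" if "s \<in> D" for s
    using has_field_derivative_along_integral_curve[OF F curve that, where w = w] QF that by simp
  then have "continuous_on D (\<lambda>s. F (\<phi> s) w)"
    by (meson DERIV_isCont continuous_at_imp_continuous_on)
  then obtain const where const: "\<And>s. s \<in> D \<Longrightarrow> F (\<phi> s) w = const"
    using DERIV_zero_connected_constant[OF D(2,1) finite.emptyI] deriv_zero by blast
  have "F 0 w = const"
  proof (rule continuous_constant_on_closure[OF _ _ limit_zero])
    show "continuous_on (closure (\<phi> ` D)) (\<lambda>z. F z w)"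
      using continuous_on_subset[OF continuous_on_zw_polynomial[OF F]] by blast
    show "F x w = const" if "x \<in> \<phi> ` D" for x
      using const that by auto
  qed
  then show ?thesis
    using const[OF t] F_zero by simp
qed

lemma vanishes_along_integral_curve_if_funpow_Qop_vanishes:
  assumes "zw_polynomial F" "integral_curve qc \<phi> D" "0 \<in> closure (\<phi> ` D)"
    and "vfield qc 0 = 0" "F 0 w = 0"
    and "\<forall>s\<in>D. (Qop qc ^^ k) F (\<phi> s) w = 0" "t \<in> D"
  shows "F (\<phi> t) w = 0"
  using assms
proof (induction k arbitrary: F t)
  case (Suc k)
  have "zw_polynomial (Qop qc F)"
    using Suc.prems(1) by (rule zw_polynomial_Qop)
  moreover have "\<forall>s\<in>D. (Qop qc ^^ k) (Qop qc F) (\<phi> s) w = 0"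
    using Suc.prems(6) by (simp add: funpow_swap1)
  ultimately have "\<forall>s\<in>D. Qop qc F (\<phi> s) w = 0"
    using Suc.IH Suc.prems(2-4) Qop_at_zero[OF Suc.prems(4)] by blast
  then show ?case
    using vanishes_along_integral_curve_if_Qop_vanishes[OF Suc.prems(1-3,5)] Suc.prems(7) by blast
qed simp

theorem lemma2p3:
  fixes m :: "'n::finite \<Rightarrow> nat"
    and c :: "('n \<Rightarrow> nat) \<Rightarrow> ('n \<Rightarrow> nat) \<Rightarrow> complex"
    and qc :: "'n \<Rightarrow> ('n \<Rightarrow> nat) \<Rightarrow> complex"
    and S :: "(complex^'n) set"
    and \<nu> :: real and \<alpha> :: nat
  assumes m_pos: "\<forall>j. m j > 0"
    and p_fin: "finite {(A,B). c A B \<noteq> 0}"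
    and p_real: "\<forall>z. Im (pfun c z (cnjv z)) = 0"
    and p_hom: "\<forall>A B. c A B \<noteq> 0 \<longrightarrow> wt m A + wt m B = 1"
    and p_mixed: "\<forall>A B. c A B \<noteq> 0 \<longrightarrow> A \<noteq> (\<lambda>_. 0) \<and> B \<noteq> (\<lambda>_. 0)"
    and Q_fin: "\<forall>j. finite {A. qc j A \<noteq> 0}"
    and Q_hom: "\<exists>\<mu>::real. \<forall>j A. qc j A \<noteq> 0 \<longrightarrow> wt m A = \<mu> - delta m j"
    and Q_zero: "vfield qc 0 = 0"
    and orbit: "is_orbit qc S"
    and nontriv: "\<exists>x\<in>S. \<exists>y\<in>S. x \<noteq> y"
    and zero_cl: "0 \<in> closure S"
    and Q_nz: "\<forall>x\<in>S. vfield qc x \<noteq> 0"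
    and alpha_pos: "\<alpha> > 0"
    and annihil: "\<forall>z. (Qop qc ^^ \<alpha>) (psig m c \<nu>) z (cnjv z) = 0"
  shows "\<forall>z\<in>S. psig m c \<nu> z (cnjv z) = 0"
proof
  fix z
  assume "z \<in> S"
  obtain \<phi> D where curve: "integral_curve qc \<phi> D" and S: "S = \<phi> ` D"
    using orbit by (auto simp: is_orbit_def maximal_integral_curve_def)
  with \<open>z \<in> S\<close> obtain t where "t \<in> D" "z = \<phi> t" by auto
  have "(Qop qc ^^ \<alpha>) (psig m c \<nu>) z' w = 0" for z' w
    using zw_polynomial_eq_zero_from_cnj[OF zw_polynomial_funpow_Qop[OF zw_polynomial_psig]] annihil
    by blast
  moreover have "psig m c \<nu> 0 (cnjv z) = 0"
    using p_mixed by (intro psig_at_zero) blast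
  ultimately show "psig m c \<nu> z (cnjv z) = 0"
    using vanishes_along_integral_curve_if_funpow_Qop_vanishes[OF zw_polynomial_psig curve]
      zero_cl Q_zero \<open>t \<in> D\<close> \<open>z = \<phi> t\<close> S by blast
qed

end
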